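(* Let $D=3$, $L>0$, $\omega>0$, and define on $\mathbb R\times[-L/2,L/2]$ the maps $T(\tau,\sigma):=\tau$ and $$Y(\tau,\sigma):=(\sigma\cos\omega\tau,\ \sigma\sin\omega\tau)\in\mathbb R^2 .$$ Then $Y'^2=1$ and $(\dot Y,Y')=0$ identically, $(T,Y)$ satisfies the Euler–Lagrange equations of $L_{ns}$ on $\mathbb R\times(-L/2,L/2)$, and the free-end boundary conditions $$\frac{\partial L_{ns}}{\partial T'}\Big|_{\sigma=\pm L/2}=0,\qquad \frac{\partial L_{ns}}{\partial Y'^i}\Big|_{\sigma=\pm L/2}=0\ \ (i=1,2)$$ hold for all $\tau$ if and only if $L\omega=2\sqrt2$.
   Context: Coordinates are $(\tau,\sigma)$; dot and prime denote $\partial_\tau$, $\partial_\sigma$. For vectors in $\mathbb R^{2}$, $(\cdot,\cdot)$ is the Euclidean scalar product and $V^2=(V,V)$. Units with speed of light $c=1$. Fix a constant $\rho>0$. Define $$A^2:=\dot T^2Y'^2+T'^2\dot Y^2-2\dot TT'(\dot Y,Y'),\qquad N:=\dot Y^2Y'^2-(\dot Y,Y')^2,$$ and the nonrelativistic string Lagrangian density, regarded as a function of $(\dot T,T',\dot Y,Y')$ on the region $A^2>0$: $$L_{ns}:=\rho\Big[\frac{N}{2\sqrt{A^2}}-\sqrt{A^2}\Big].$$ The Euler–Lagrange equations of $L_{ns}$ are $$\partial_\tau\frac{\partial L_{ns}}{\partial\dot T}+\partial_\sigma\frac{\partial L_{ns}}{\partial T'}=0,\qquad \partial_\tau\frac{\partial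 L_{ns}}{\partial\dot Y^i}+\partial_\sigma\frac{\partial L_{ns}}{\partial Y'^i}=0\quad(i=1,2),$$ where the partial derivatives of $L_{ns}$ are evaluated along $(T,Y)$. *)

theory Defs
  imports "HOL-Analysis.Analysis"
begin

definition Asq :: "real \<Rightarrow> real \<Rightarrow> real^2 \<Rightarrow> real^2 \<Rightarrow> real" where
  "Asq Td Tp Yd Yp = Td^2 * (Yp \<bullet> Yp) + Tp^2 * (Yd \<bullet> Yd) - 2 * Td * Tp * (Yd \<bullet> Yp)"

definition Nf :: "real^2 \<Rightarrow> real^2 \<Rightarrow> real" where
  "Nf Yd Yp = (Yd \<bullet> Yd) * (Yp \<bullet> Yp) - (Yd \<bullet> Yp)^2"

definition Lns :: "real \<Rightarrow> real \<Rightarrow> real \<Rightarrow> real^2 \<Rightarrow> real^2 \<Rightarrow> real" where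
  "Lns \<rho> Td Tp Yd Yp = \<rho> * (Nf Yd Yp / (2 * sqrt (Asq Td Tp Yd Yp)) - sqrt (Asq Td Tp Yd Yp))"

definition vupd :: "real^2 \<Rightarrow> 2 \<Rightarrow> real \<Rightarrow> real^2" where
  "vupd v i s = (\<chi> j. if j = i then s else v $ j)"

definition dL_dTd :: "real \<Rightarrow> real \<Rightarrow> real \<Rightarrow> real^2 \<Rightarrow> real^2 \<Rightarrow> real" where
  "dL_dTd \<rho> Td Tp Yd Yp = deriv (\<lambda>s. Lns \<rho> s Tp Yd Yp) Td"

definition dL_dTp :: "real \<Rightarrow> real \<Rightarrow> real \<Rightarrow> real^2 \<Rightarrow> real^2 \<Rightarrow> real" where
  "dL_dTp \<rho> Td Tp Yd Yp = deriv (\<lambda>s. Lns \<rho> Td s Yd Yp) Tp"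

definition dL_dYd :: "real \<Rightarrow> 2 \<Rightarrow> real \<Rightarrow> real \<Rightarrow> real^2 \<Rightarrow> real^2 \<Rightarrow> real" where
  "dL_dYd \<rho> i Td Tp Yd Yp = deriv (\<lambda>s. Lns \<rho> Td Tp (vupd Yd i s) Yp) (Yd $ i)"

definition dL_dYp :: "real \<Rightarrow> 2 \<Rightarrow> real \<Rightarrow> real \<Rightarrow> real^2 \<Rightarrow> real^2 \<Rightarrow> real" where
  "dL_dYp \<rho> i Td Tp Yd Yp = deriv (\<lambda>s. Lns \<rho> Td Tp Yd (vupd Yp i s)) (Yp $ i)"

definition Tsol :: "real \<Rightarrow> real \<Rightarrow> real" where
  "Tsol \<tau> \<sigma> = \<tau>"

definition Ysol :: "real \<Rightarrow> real \<Rightarrow> real \<Rightarrow> real^2" where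
  "Ysol \<omega> \<tau> \<sigma> = vector [\<sigma> * cos (\<omega> * \<tau>), \<sigma> * sin (\<omega> * \<tau>)]"

definition Tdot :: "real \<Rightarrow> real \<Rightarrow> real" where
  "Tdot \<tau> \<sigma> = deriv (\<lambda>t. Tsol t \<sigma>) \<tau>"
definition Tprime :: "real \<Rightarrow> real \<Rightarrow> real" where
  "Tprime \<tau> \<sigma> = deriv (\<lambda>s. Tsol \<tau> s) \<sigma>"
definition Ydot :: "real \<Rightarrow> real \<Rightarrow> real \<Rightarrow> real^2" where
  "Ydot \<omega> \<tau> \<sigma> = vector_derivative (\<lambda>t. Ysol \<omega> t \<sigma>) (at \<tau>)"
definition Yprime :: "real \<Rightarrow> real \<Rightarrow> real \<Rightarrow> real^2" where
  "Yprime \<omega> \<tau> \<sigma> = vector_derivative (\<lambda>s. Ysol \<omega> \<tau> s) (at \<sigma>)"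

end

theory Submission imports Defs begin

text \<open>Write \<open>Yd\<close>, \<open>Yp\<close> for \<open>\<partial>\<^sub>\<tau>Y\<close>, \<open>\<partial>\<^sub>\<sigma>Y\<close>. In the static gauge \<open>\<partial>\<^sub>\<tau>T = 1\<close>, \<open>\<partial>\<^sub>\<sigma>T = 0\<close>
  with \<open>Yp\<^sup>2 = 1\<close> and \<open>(Yd, Yp) = 0\<close> one has \<open>A\<^sup>2 = 1\<close> and \<open>N = Yd\<^sup>2\<close>, and the momenta of
  \<open>L\<^sub>n\<^sub>s\<close> are \<open>-\<rho>(Yd\<^sup>2/2 + 1)\<close>, \<open>0\<close>, \<open>\<rho> Yd\<close> and \<open>\<rho>(Yd\<^sup>2/2 - 1) Yp\<close>.
  For the rotating string \<open>Yd\<^sup>2 = \<sigma>\<^sup>2\<omega>\<^sup>2\<close>, so the equation for \<open>Y\<close> reads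
  \<open>\<partial>\<^sub>\<tau>Yd + \<omega>\<^sup>2\<sigma> Yp = 0\<close>, true because \<open>\<partial>\<^sub>\<tau>Yd = -\<omega>\<^sup>2Y\<close> and \<open>Y = \<sigma> Yp\<close>;
  the equation for \<open>T\<close> is trivial. Since \<open>Yp \<noteq> 0\<close>, the free-end momentum vanishes at
  \<open>\<sigma> = \<plusminus>L/2\<close> iff \<open>L\<^sup>2\<omega>\<^sup>2/4 = 2\<close>.\<close>

lemma vupd_eq_axis: "vupd v i s = v + (s - v $ i) *\<^sub>R axis i 1"
  by (simp add: vupd_def vec_eq_iff axis_def)

lemma vupd_same [simp]: "vupd v i (v $ i) = v"
  by (simp add: vupd_eq_axis)

lemma has_real_derivative_inner_vupd:
  "((\<lambda>s. vupd v i s \<bullet> w) has_real_derivative w $ i) (at x)"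
proof -
  have "(\<lambda>s. vupd v i s \<bullet> w) = (\<lambda>s. v \<bullet> w + (s - v $ i) * w $ i)"
    by (simp add: vupd_eq_axis inner_add_left inner_axis')
  then show ?thesis
    by (auto intro!: derivative_eq_intros)
qed

lemma has_real_derivative_inner_vupd_right:
  "((\<lambda>s. w \<bullet> vupd v i s) has_real_derivative w $ i) (at x)"
  using has_real_derivative_inner_vupd by (simp add: inner_commute[of w])

lemma has_real_derivative_inner_vupd_self:
  "((\<lambda>s. vupd v i s \<bullet> vupd v i s) has_real_derivative 2 * v $ i) (at (v $ i))"
proof -
  have "(\<lambda>s. vupd v i s \<bullet> vupd v i s) = (\<lambda>s. v \<bullet> v + 2 * (s - v $ i) * v $ i + (s - v $ i)\<^sup>2)"
    by (simp add: vupd_eq_axis inner_add_left inner_add_right inner_axis axis_nth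
        inner_commute[of "axis i 1" v] power2_eq_square algebra_simps)
  then show ?thesis
    by (auto intro!: derivative_eq_intros)
qed

lemma deriv_Lns_form_at_unit:
  assumes "(u has_real_derivative u') (at x)" and "u x = 1"
    and "(n has_real_derivative n') (at x)" and "n x = n0"
  shows "deriv (\<lambda>s. \<rho> * (n s / (2 * sqrt (u s)) - sqrt (u s))) x
           = \<rho> * (n' / 2 - n0 * u' / 4 - u' / 2)"
proof -
  have "((\<lambda>s. \<rho> * (n s / (2 * sqrt (u s)) - sqrt (u s))) has_real_derivative
     \<rho> * ((n' * (2 * sqrt (u x)) - n x * (2 * (u' * inverse (sqrt (u x)) / 2))) / (2 * sqrt (u x))\<^sup>2
       - u' * inverse (sqrt (u x)) / 2)) (at x)"
    by (rule derivative_eq_intros assms refl | simp add: assms)+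
  then show ?thesis
    using assms(2,4) by (simp add: DERIV_imp_deriv field_simps)
qed

context
  fixes Yd Yp :: "real^2"
  assumes unit: "Yp \<bullet> Yp = 1" and orth: "Yd \<bullet> Yp = 0"
begin

lemma dL_dTd_static_gauge: "dL_dTd \<rho> 1 0 Yd Yp = - \<rho> * (Yd \<bullet> Yd / 2 + 1)"
proof -
  have "dL_dTd \<rho> 1 0 Yd Yp = \<rho> * (0 / 2 - Nf Yd Yp * 2 / 4 - 2 / 2)"
    unfolding dL_dTd_def Lns_def
    by (rule deriv_Lns_form_at_unit[where u="\<lambda>s. Asq s 0 Yd Yp" and n="\<lambda>s. Nf Yd Yp"])
      (auto intro!: derivative_eq_intros simp: Asq_def unit)
  then show ?thesis
    by (simp add: Nf_def unit orth algebra_simps)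
qed

lemma dL_dTp_static_gauge: "dL_dTp \<rho> 1 0 Yd Yp = 0"
proof -
  have "dL_dTp \<rho> 1 0 Yd Yp = \<rho> * (0 / 2 - Nf Yd Yp * 0 / 4 - 0 / 2)"
    unfolding dL_dTp_def Lns_def
    by (rule deriv_Lns_form_at_unit[where u="\<lambda>s. Asq 1 s Yd Yp" and n="\<lambda>s. Nf Yd Yp"])
      (auto intro!: derivative_eq_intros simp: Asq_def unit orth)
  then show ?thesis
    by simp
qed

lemma dL_dYd_static_gauge: "dL_dYd \<rho> i 1 0 Yd Yp = \<rho> * Yd $ i"
proof -
  have "dL_dYd \<rho> i 1 0 Yd Yp
          = \<rho> * ((2 * Yd $ i * (Yp \<bullet> Yp) - 2 * (Yd \<bullet> Yp) * Yp $ i) / 2 - Nf Yd Yp * 0 / 4 - 0 / 2)"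
    unfolding dL_dYd_def Lns_def
    by (rule deriv_Lns_form_at_unit[where u="\<lambda>s. Asq 1 0 (vupd Yd i s) Yp"
          and n="\<lambda>s. Nf (vupd Yd i s) Yp"])
      (auto intro!: derivative_eq_intros has_real_derivative_inner_vupd
        has_real_derivative_inner_vupd_self simp: Asq_def Nf_def unit)
  then show ?thesis
    by (simp add: unit orth)
qed

lemma dL_dYp_static_gauge: "dL_dYp \<rho> i 1 0 Yd Yp = \<rho> * Yp $ i * (Yd \<bullet> Yd / 2 - 1)"
proof -
  have "dL_dYp \<rho> i 1 0 Yd Yp
          = \<rho> * (((Yd \<bullet> Yd) * (2 * Yp $ i) - 2 * (Yd \<bullet> Yp) * Yd $ i) / 2
                 - Nf Yd Yp * (2 * Yp $ i) / 4 - 2 * Yp $ i / 2)"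
    unfolding dL_dYp_def Lns_def
    by (rule deriv_Lns_form_at_unit[where u="\<lambda>s. Asq 1 0 Yd (vupd Yp i s)"
          and n="\<lambda>s. Nf Yd (vupd Yp i s)"])
      (auto intro!: derivative_eq_intros has_real_derivative_inner_vupd
        has_real_derivative_inner_vupd_right has_real_derivative_inner_vupd_self
        simp: Asq_def Nf_def unit)
  then show ?thesis
    by (simp add: Nf_def unit orth algebra_simps)
qed

end

lemma vector2_decomp: "vector [a, b] = a *\<^sub>R (vector [1, 0] :: real^2) + b *\<^sub>R vector [0, 1]"
  by (simp add: vec_eq_iff forall_2)

lemma inner_vector2: "(vector [a, b] :: real^2) \<bullet> vector [c, d] = a * c + b * d"
  by (simp add: inner_vec_def sum_2)

lemma Tdot_eq: "Tdot \<tau> \<sigma> = 1"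
  by (simp add: Tdot_def Tsol_def)

lemma Tprime_eq: "Tprime \<tau> \<sigma> = 0"
  by (simp add: Tprime_def Tsol_def)

lemma Ydot_eq: "Ydot \<omega> \<tau> \<sigma> = vector [- \<sigma> * \<omega> * sin (\<omega> * \<tau>), \<sigma> * \<omega> * cos (\<omega> * \<tau>)]"
proof -
  have "((\<lambda>t. Ysol \<omega> t \<sigma>) has_vector_derivative
          vector [- \<sigma> * \<omega> * sin (\<omega> * \<tau>), \<sigma> * \<omega> * cos (\<omega> * \<tau>)]) (at \<tau>)"
    unfolding Ysol_def vector2_decomp[of "\<sigma> * cos (\<omega> * _)"]
    by (rule derivative_eq_intros refl)+ (simp add: vec_eq_iff forall_2)
  then show ?thesis
    unfolding Ydot_def by (rule vector_derivative_at)
qed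

lemma Yprime_eq: "Yprime \<omega> \<tau> \<sigma> = vector [cos (\<omega> * \<tau>), sin (\<omega> * \<tau>)]"
proof -
  have "((\<lambda>s. Ysol \<omega> \<tau> s) has_vector_derivative vector [cos (\<omega> * \<tau>), sin (\<omega> * \<tau>)]) (at \<sigma>)"
    unfolding Ysol_def vector2_decomp[of "_ * cos (\<omega> * \<tau>)"]
    by (rule derivative_eq_intros refl)+ (simp add: vec_eq_iff forall_2)
  then show ?thesis
    unfolding Yprime_def by (rule vector_derivative_at)
qed

lemma Yprime_unit: "Yprime \<omega> \<tau> \<sigma> \<bullet> Yprime \<omega> \<tau> \<sigma> = 1"
  by (simp add: Yprime_eq inner_vector2 flip: power2_eq_square)

lemma Ydot_orthogonal_Yprime: "Ydot \<omega> \<tau> \<sigma> \<bullet> Yprime \<omega> \<tau> \<sigma> = 0"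
  by (simp add: Ydot_eq Yprime_eq inner_vector2 algebra_simps)

lemma Ydot_inner_self: "Ydot \<omega> \<tau> \<sigma> \<bullet> Ydot \<omega> \<tau> \<sigma> = (\<sigma> * \<omega>)\<^sup>2"
proof -
  have "Ydot \<omega> \<tau> \<sigma> \<bullet> Ydot \<omega> \<tau> \<sigma> = (\<sigma> * \<omega>)\<^sup>2 * ((sin (\<omega> * \<tau>))\<^sup>2 + (cos (\<omega> * \<tau>))\<^sup>2)"
    unfolding Ydot_eq inner_vector2 power2_eq_square by algebra
  then show ?thesis
    by simp
qed

lemma momenta_rotating_string:
  "dL_dTd \<rho> (Tdot \<tau> \<sigma>) (Tprime \<tau> \<sigma>) (Ydot \<omega> \<tau> \<sigma>) (Yprime \<omega> \<tau> \<sigma>)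
     = - \<rho> * ((\<sigma> * \<omega>)\<^sup>2 / 2 + 1)"
  "dL_dTp \<rho> (Tdot \<tau> \<sigma>) (Tprime \<tau> \<sigma>) (Ydot \<omega> \<tau> \<sigma>) (Yprime \<omega> \<tau> \<sigma>) = 0"
  "dL_dYd \<rho> i (Tdot \<tau> \<sigma>) (Tprime \<tau> \<sigma>) (Ydot \<omega> \<tau> \<sigma>) (Yprime \<omega> \<tau> \<sigma>)
     = \<rho> * Ydot \<omega> \<tau> \<sigma> $ i"
  "dL_dYp \<rho> i (Tdot \<tau> \<sigma>) (Tprime \<tau> \<sigma>) (Ydot \<omega> \<tau> \<sigma>) (Yprime \<omega> \<tau> \<sigma>)
     = \<rho> * Yprime \<omega> \<tau> \<sigma> $ i * ((\<sigma> * \<omega>)\<^sup>2 / 2 - 1)"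
  using Yprime_unit Ydot_orthogonal_Yprime
  by (simp_all add: Tdot_eq Tprime_eq dL_dTd_static_gauge dL_dTp_static_gauge
      dL_dYd_static_gauge dL_dYp_static_gauge Ydot_inner_self)

lemma euler_lagrange_rotating_string:
  "deriv (\<lambda>t. dL_dTd \<rho> (Tdot t \<sigma>) (Tprime t \<sigma>) (Ydot \<omega> t \<sigma>) (Yprime \<omega> t \<sigma>)) \<tau>
     + deriv (\<lambda>s. dL_dTp \<rho> (Tdot \<tau> s) (Tprime \<tau> s) (Ydot \<omega> \<tau> s) (Yprime \<omega> \<tau> s)) \<sigma> = 0"
  "deriv (\<lambda>t. dL_dYd \<rho> i (Tdot t \<sigma>) (Tprime t \<sigma>) (Ydot \<omega> t \<sigma>) (Yprime \<omega> t \<sigma>)) \<tau>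
     + deriv (\<lambda>s. dL_dYp \<rho> i (Tdot \<tau> s) (Tprime \<tau> s) (Ydot \<omega> \<tau> s) (Yprime \<omega> \<tau> s)) \<sigma> = 0"
proof -
  show "deriv (\<lambda>t. dL_dTd \<rho> (Tdot t \<sigma>) (Tprime t \<sigma>) (Ydot \<omega> t \<sigma>) (Yprime \<omega> t \<sigma>)) \<tau>
     + deriv (\<lambda>s. dL_dTp \<rho> (Tdot \<tau> s) (Tprime \<tau> s) (Ydot \<omega> \<tau> s) (Yprime \<omega> \<tau> s)) \<sigma> = 0"
    by (simp add: momenta_rotating_string)
  have "deriv (\<lambda>t. \<rho> * (- \<sigma> * \<omega> * sin (\<omega> * t))) \<tau> = - \<rho> * \<omega>\<^sup>2 * (\<sigma> * cos (\<omega> * \<tau>))"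
    "deriv (\<lambda>t. \<rho> * (\<sigma> * \<omega> * cos (\<omega> * t))) \<tau> = - \<rho> * \<omega>\<^sup>2 * (\<sigma> * sin (\<omega> * \<tau>))"
    "deriv (\<lambda>s. \<rho> * cos (\<omega> * \<tau>) * ((s * \<omega>)\<^sup>2 / 2 - 1)) \<sigma> = \<rho> * \<omega>\<^sup>2 * (\<sigma> * cos (\<omega> * \<tau>))"
    "deriv (\<lambda>s. \<rho> * sin (\<omega> * \<tau>) * ((s * \<omega>)\<^sup>2 / 2 - 1)) \<sigma> = \<rho> * \<omega>\<^sup>2 * (\<sigma> * sin (\<omega> * \<tau>))"
    by (auto intro!: DERIV_imp_deriv derivative_eq_intros simp: power2_eq_square)
  then show "deriv (\<lambda>t. dL_dYd \<rho> i (Tdot t \<sigma>) (Tprime t \<sigma>) (Ydot \<omega> t \<sigma>) (Yprime \<omega> t \<sigma>)) \<tau>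
     + deriv (\<lambda>s. dL_dYp \<rho> i (Tdot \<tau> s) (Tprime \<tau> s) (Ydot \<omega> \<tau> s) (Yprime \<omega> \<tau> s)) \<sigma> = 0"
    unfolding momenta_rotating_string using exhaust_2[of i] by (auto simp: Ydot_eq Yprime_eq)
qed

lemma free_end_condition_iff:
  assumes "\<rho> \<noteq> 0"
  shows "(dL_dTp \<rho> (Tdot \<tau> \<sigma>) (Tprime \<tau> \<sigma>) (Ydot \<omega> \<tau> \<sigma>) (Yprime \<omega> \<tau> \<sigma>) = 0
          \<and> (\<forall>i. dL_dYp \<rho> i (Tdot \<tau> \<sigma>) (Tprime \<tau> \<sigma>) (Ydot \<omega> \<tau> \<sigma>) (Yprime \<omega> \<tau> \<sigma>) = 0))
         \<longleftrightarrow> (\<sigma> * \<omega>)\<^sup>2 = 2"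
proof -
  have "Yprime \<omega> \<tau> \<sigma> \<noteq> 0"
    using Yprime_unit[of \<omega> \<tau> \<sigma>] by auto
  then obtain j where "Yprime \<omega> \<tau> \<sigma> $ j \<noteq> 0"
    by (auto simp: vec_eq_iff)
  then show ?thesis
    using assms by (auto simp: momenta_rotating_string)
qed

lemma free_ends_rotating_string_iff:
  assumes "\<rho> \<noteq> 0" and "L > 0" and "\<omega> > 0"
  shows "(\<forall>\<tau>. \<forall>\<sigma>\<in>{L/2, -L/2}.
           dL_dTp \<rho> (Tdot \<tau> \<sigma>) (Tprime \<tau> \<sigma>) (Ydot \<omega> \<tau> \<sigma>) (Yprime \<omega> \<tau> \<sigma>) = 0
           \<and> (\<forall>i. dL_dYp \<rho> i (Tdot \<tau> \<sigma>) (Tprime \<tau> \<sigma>) (Ydot \<omega> \<tau> \<sigma>) (Yprime \<omega> \<tau> \<sigma>) = 0))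
         \<longleftrightarrow> L * \<omega> = 2 * sqrt 2"
proof -
  have "(L / 2 * \<omega>)\<^sup>2 = 2 \<longleftrightarrow> (L * \<omega>)\<^sup>2 = (2 * sqrt 2)\<^sup>2"
    by (simp add: power_mult_distrib power_divide)
  also have "\<dots> \<longleftrightarrow> L * \<omega> = 2 * sqrt 2"
    using assms(2,3) by (intro power2_eq_iff_nonneg) auto
  finally show ?thesis
    by (simp add: free_end_condition_iff[OF assms(1)])
qed

theorem mainTheorem7:
  fixes \<rho> L \<omega> :: real
  assumes "\<rho> > 0" and "L > 0" and "\<omega> > 0"
  shows "(\<forall>\<tau> \<sigma>. Yprime \<omega> \<tau> \<sigma> \<bullet> Yprime \<omega> \<tau> \<sigma> = 1 \<and> Ydot \<omega> \<tau> \<sigma> \<bullet> Yprime \<omega> \<tau> \<sigma> = 0)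
    \<and> (\<forall>\<tau> \<sigma>. -L/2 < \<sigma> \<and> \<sigma> < L/2 \<longrightarrow>
         deriv (\<lambda>t. dL_dTd \<rho> (Tdot t \<sigma>) (Tprime t \<sigma>) (Ydot \<omega> t \<sigma>) (Yprime \<omega> t \<sigma>)) \<tau>
         + deriv (\<lambda>s. dL_dTp \<rho> (Tdot \<tau> s) (Tprime \<tau> s) (Ydot \<omega> \<tau> s) (Yprime \<omega> \<tau> s)) \<sigma> = 0
       \<and> (\<forall>i::2.
         deriv (\<lambda>t. dL_dYd \<rho> i (Tdot t \<sigma>) (Tprime t \<sigma>) (Ydot \<omega> t \<sigma>) (Yprime \<omega> t \<sigma>)) \<tau>
         + deriv (\<lambda>s. dL_dYp \<rho> i (Tdot \<tau> s) (Tprime \<tau> s) (Ydot \<omega> \<tau> s) (Yprime \<omega> \<tau> s)) \<sigma> = 0))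
    \<and> ((\<forall>\<tau>. \<forall>\<sigma>\<in>{L/2, -L/2}.
          dL_dTp \<rho> (Tdot \<tau> \<sigma>) (Tprime \<tau> \<sigma>) (Ydot \<omega> \<tau> \<sigma>) (Yprime \<omega> \<tau> \<sigma>) = 0
        \<and> (\<forall>i::2. dL_dYp \<rho> i (Tdot \<tau> \<sigma>) (Tprime \<tau> \<sigma>) (Ydot \<omega> \<tau> \<sigma>) (Yprime \<omega> \<tau> \<sigma>) = 0))
       \<longleftrightarrow> L * \<omega> = 2 * sqrt 2)"
  using Yprime_unit Ydot_orthogonal_Yprime euler_lagrange_rotating_string free_ends_rotating_string_iff assms
  by simp

end
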